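(* Fix a non-negative integer $t$ and consider finite rooted trees $T$ such that every root-to-leaf path $v_1,v_2,\ldots,v_q$ satisfies $\sum_{i=1}^{q} c(v_i) \le t$, where $c(v)$ denotes the number of children of node $v$. The maximum number of leaves of such a tree is $l(t)$, where $l(1)=1$ and for $t\ne 1$: $l(t)=3^i$ if $t=3i$; $l(t)=4\cdot 3^{i-1}$ if $t=3i+1$; $l(t)=2\cdot 3^i$ if $t=3i+2$ (with $i$ a non-negative integer). *)

theory Defs
  imports Main
begin

datatype tree = Node "tree list"

fun children_count :: "tree \<Rightarrow> nat" where
  "children_count (Node ts) = length ts"

inductive root_leaf_path :: "tree \<Rightarrow> tree list \<Rightarrow> bool" where
  leaf: "root_leaf_path (Node []) [Node []]"
| step: "s \<in> set ts \<Longrightarrow> root_leaf_path s p \<Longrightarrow> root_leaf_path (Node ts) (Node ts # p)"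

fun leaves :: "tree \<Rightarrow> nat" where
  "leaves (Node ts) = (if ts = [] then 1 else sum_list (map leaves ts))"

definition admissible :: "nat \<Rightarrow> tree \<Rightarrow> bool" where
  "admissible t T \<longleftrightarrow> (\<forall>p. root_leaf_path T p \<longrightarrow> (\<Sum>v\<leftarrow>p. children_count v) \<le> t)"

definition l :: "nat \<Rightarrow> nat" where
  "l t = (if t = 1 then 1
          else if t mod 3 = 0 then 3 ^ (t div 3)
          else if t mod 3 = 1 then 4 * 3 ^ (t div 3 - 1)
          else 2 * 3 ^ (t div 3))"

end

theory Submission
  imports Defs
begin

text \<open>
  Let the root of an admissible tree have \<open>k \<ge> 1\<close> children. Every subtree is admissible for
  \<open>t - k\<close>, so by induction the tree has at most \<open>k \<cdot> l (t - k)\<close> leaves, and \<open>k \<cdot> l s \<le> l (s + k)\<close>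
  holds for all \<open>s\<close> and \<open>k \<ge> 1\<close>: since \<open>l (n + 3) = 3 \<cdot> l n\<close> for \<open>n \<ge> 2\<close>, this reduces to
  finitely many cases with \<open>s, k \<le> 4\<close>. Conversely, the bound is attained by hanging three
  copies of an extremal tree for \<open>t - 3\<close> below a new root, starting from a root with at most
  3 leaf children or, for \<open>t = 4\<close>, the complete binary tree of depth 2.
\<close>

lemma l_pos: "1 \<le> l t"
  by (simp add: l_def)

lemma l_add_3:
  assumes "2 \<le> n"
  shows "l (n + 3) = 3 * l n"
proof -
  have mod3: "(n + 3) mod 3 = n mod 3" and div3: "(n + 3) div 3 = Suc (n div 3)"
    by auto
  show ?thesis
  proof (cases "n mod 3 = 1")
    case True
    with assms have "n div 3 \<noteq> 0" by presburger
    then obtain j where "n div 3 = Suc j" using not0_implies_Suc by blast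
    with True mod3 div3 assms show ?thesis by (simp add: l_def)
  qed (use assms mod3 div3 in \<open>auto simp: l_def\<close>)
qed

lemma mult_l_le_l_add: "1 \<le> k \<Longrightarrow> k * l s \<le> l (s + k)"
proof (induction "s + k" arbitrary: s k rule: less_induct)
  case less
  consider "5 \<le> s" | "5 \<le> k" | "s \<le> 4" "k \<le> 4"
    by linarith
  then show ?case
  proof cases
    case 1
    then obtain s' where s': "s = s' + 3" "2 \<le> s'"
      by (intro that[of "s - 3"]) auto
    have "k * l s' \<le> l (s' + k)"
      using less s' by simp
    with s' show ?thesis
      using l_add_3[of s'] l_add_3[of "s' + k"] by (simp add: algebra_simps)
  next
    case 2
    then obtain k' where k': "k = k' + 3" "2 \<le> k'"
      by (intro that[of "k - 3"]) auto
    have "k' * l s \<le> l (s + k')"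
      using less k' by simp
    moreover have "k * l s \<le> 3 * (k' * l s)"
      using k' by simp
    ultimately have "k * l s \<le> 3 * l (s + k')"
      by linarith
    with k' show ?thesis
      using l_add_3[of "s + k'"] by (simp add: algebra_simps)
  next
    case 3
    with less.prems have "s \<in> {0, 1, 2, 3, 4}" "k \<in> {1, 2, 3, 4}"
      by auto
    then show ?thesis
      by (elim insertE emptyE) (simp_all add: l_def)
  qed
qed

inductive_cases root_leaf_path_NodeE: "root_leaf_path (Node ts) p"

lemma root_leaf_path_exists: "\<exists>p. root_leaf_path T p"
proof (induction T)
  case (Node ts)
  show ?case
  proof (cases ts)
    case Nil
    then show ?thesis using root_leaf_path.leaf by blast
  next
    case (Cons s ts')
    with Node obtain p where "root_leaf_path s p" by auto
    with Cons show ?thesis using root_leaf_path.step[of s ts p] by auto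
  qed
qed

lemma admissible_subtree:
  assumes "admissible t (Node ts)" and "s \<in> set ts"
  shows "admissible (t - length ts) s" and "length ts \<le> t"
proof -
  have bound: "(\<Sum>v\<leftarrow>p. children_count v) + length ts \<le> t" if "root_leaf_path s p" for p
    using assms root_leaf_path.step[OF assms(2) that] by (auto simp: admissible_def)
  then show "admissible (t - length ts) s"
    by (fastforce simp: admissible_def)
  from root_leaf_path_exists[of s] bound show "length ts \<le> t"
    by fastforce
qed

lemma admissible_leaf: "admissible t (Node [])"
  by (auto simp: admissible_def elim: root_leaf_path_NodeE)

lemma admissible_Node:
  "ts \<noteq> [] \<Longrightarrow> (\<And>s. s \<in> set ts \<Longrightarrow> admissible m s) \<Longrightarrow> admissible (m + length ts) (Node ts)"
  by (fastforce simp: admissible_def elim: root_leaf_path_NodeE)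

lemma leaves_le_l: "admissible t T \<Longrightarrow> leaves T \<le> l t"
proof (induction T arbitrary: t)
  case (Node ts)
  show ?case
  proof (cases "ts = []")
    case True
    then show ?thesis using l_pos by simp
  next
    case False
    let ?k = "length ts"
    have "leaves (Node ts) = (\<Sum>s\<leftarrow>ts. leaves s)"
      using False by simp
    also have "\<dots> \<le> (\<Sum>s\<leftarrow>ts. l (t - ?k))"
      using Node admissible_subtree(1) by (intro sum_list_mono) blast
    also have "\<dots> = ?k * l (t - ?k)"
      by (simp add: sum_list_triv)
    also have "\<dots> \<le> l (t - ?k + ?k)"
      using False by (intro mult_l_le_l_add) (cases ts, auto)
    also have "t - ?k + ?k = t"
      using admissible_subtree(2)[OF Node.prems, of "hd ts"] False by simp
    finally show ?thesis .
  qed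
qed

definition fan :: "nat \<Rightarrow> tree \<Rightarrow> tree" where
  "fan k T = Node (replicate k T)"

lemma leaves_fan: "1 \<le> k \<Longrightarrow> leaves (fan k T) = k * leaves T"
  by (simp add: fan_def sum_list_replicate)

lemma admissible_fan: "1 \<le> k \<Longrightarrow> admissible m T \<Longrightarrow> admissible (m + k) (fan k T)"
  using admissible_Node[of "replicate k T" m] by (simp add: fan_def)

fun extremal_tree :: "nat \<Rightarrow> tree" where
  "extremal_tree t =
    (if t \<le> 3 then fan t (Node [])
     else if t = 4 then fan 2 (fan 2 (Node []))
     else fan 3 (extremal_tree (t - 3)))"

declare extremal_tree.simps [simp del]

lemma extremal_tree_optimal_small:
  assumes "t \<le> 4"
  shows "admissible t (extremal_tree t) \<and> leaves (extremal_tree t) = l t"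
proof -
  consider "t = 0" | "1 \<le> t" "t \<le> 3" | "t = 4"
    using assms by linarith
  then show ?thesis
  proof cases
    case 1
    then have "extremal_tree t = Node []"
      by (subst extremal_tree.simps) (simp add: fan_def)
    with 1 show ?thesis
      by (simp add: admissible_leaf l_def)
  next
    case 2
    then have "extremal_tree t = fan t (Node [])"
      by (subst extremal_tree.simps) simp
    moreover have "admissible t (fan t (Node []))"
      using 2 admissible_fan[OF _ admissible_leaf, of t 0] by simp
    moreover have "t \<in> {1, 2, 3}"
      using 2 by auto
    then have "l t = t"
      by (elim insertE emptyE) (simp_all add: l_def)
    ultimately show ?thesis
      using 2 by (simp add: leaves_fan)
  next
    case 3
    have cherry: "admissible (0 + 2) (fan 2 (Node []))"
      by (rule admissible_fan) (simp_all add: admissible_leaf)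
    have "admissible (0 + 2 + 2) (fan 2 (fan 2 (Node [])))"
      by (rule admissible_fan[OF _ cherry]) simp
    then have "admissible 4 (fan 2 (fan 2 (Node [])))"
      by (simp add: eval_nat_numeral)
    moreover have "extremal_tree t = fan 2 (fan 2 (Node []))"
      using 3 by (subst extremal_tree.simps) simp
    ultimately show ?thesis
      using 3 by (simp add: leaves_fan l_def)
  qed
qed

lemma extremal_tree_optimal: "admissible t (extremal_tree t) \<and> leaves (extremal_tree t) = l t"
proof (induction t rule: extremal_tree.induct)
  case (1 t)
  show ?case
  proof (cases "t \<le> 4")
    case True
    then show ?thesis by (rule extremal_tree_optimal_small)
  next
    case False
    then have tree: "extremal_tree t = fan 3 (extremal_tree (t - 3))"
      by (subst extremal_tree.simps) simp
    from False "1.IH" have IH: "admissible (t - 3) (extremal_tree (t - 3))"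
        "leaves (extremal_tree (t - 3)) = l (t - 3)"
      by auto
    have "l t = 3 * l (t - 3)"
      using False l_add_3[of "t - 3"] by simp
    moreover have "admissible (t - 3 + 3) (fan 3 (extremal_tree (t - 3)))"
      using IH by (intro admissible_fan) auto
    ultimately show ?thesis
      using False IH tree by (simp add: leaves_fan)
  qed
qed

theorem lemma1:
  fixes t :: nat
  shows "(\<forall>T. admissible t T \<longrightarrow> leaves T \<le> l t) \<and> (\<exists>T. admissible t T \<and> leaves T = l t)"
  using leaves_le_l extremal_tree_optimal by blast

end
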